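(* Take $\mathcal{R}=\mathsf{Comp}$ (computable partial functionals on Baire space). There exists an SCI problem $\mathcal{P}=(\Xi,\Omega,(\mathcal{M},d),\Lambda)$ with countable $\Lambda$ satisfying consistency, together with a fixed representation $\delta_\mathcal{M}$ of $\mathcal{M}$, such that: (1) there are maps $\Gamma_n,\Gamma_{n,m}:\Omega\to\mathcal{M}$ ($n,m\in\mathbb{N}$) with $\Xi(A)=\lim_{n\to\infty}\Gamma_n(A)$ and $\Gamma_n(A)=\lim_{m\to\infty}\Gamma_{n,m}(A)$ for all $A\in\Omega$ (limits in $d$), where every deepest map $\Gamma_{n,m}$ is a computable (i.e. computably realizable from names of $\mathrm{Ev}_\Lambda(A)$ to names of $\Gamma_{n,m}(A)$) general algorithm; (2) every $\Gamma_{n,m}$ is in fact a fixed-query computable general algorithm; (3) no $\Gamma_n$ is a general algorithm; (4) nevertheless there is no computable $K:\subseteq\mathbb{N}^\mathbb{N}\to\mathbb{N}^\mathbb{N}$ with $\lim^{(2)}\circ K\preceq\widehat\Xi$.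
   Context: Consistency: $\Xi(A)\neq\Xi(B)$ implies $f(A)\neq f(B)$ for some $f\in\Lambda$. A general algorithm is $\Gamma:\Omega\to\mathcal{M}$ with a query map $\Lambda_\Gamma$ assigning finite nonempty subsets of $\Lambda$, such that if $f(B)=f(A)$ for all $f\in\Lambda_\Gamma(A)$ then $\Gamma(B)=\Gamma(A)$ and $\Lambda_\Gamma(B)=\Lambda_\Gamma(A)$; it is fixed-query if $\Lambda_\Gamma$ is constant. With $\Lambda=\{f_n\}_n$, $\mathrm{Ev}_\Lambda(A)=(f_n(A))_n$, $I_\Lambda=\mathrm{Ev}_\Lambda(\Omega)\subseteq\mathbb{C}^\mathbb{N}$ carries the subspace representation $\delta_{I_\Lambda}$ of the product of Cauchy representations, and $\widehat\Xi:I_\Lambda\to\mathcal{M}$ is the unique map with $\widehat\Xi\circ\mathrm{Ev}_\Lambda=\Xi$. $\lim$ is the limit operator on Baire space (columnwise limits of eventually constant columns via a computable pairing of $\mathbb{N}^2$), $\lim^{(2)}=\lim\circ\lim$. $\lim^{(2)}\circ K\preceq\widehat\Xi$ means: for every $p\in\mathrm{dom}(\delta_{I_\Lambda})$, $K(p)\in\mathrm{dom}(\lim^{(2)})$ and $\delta_\mathcal{M}(\lim^{(2)}(K(p)))=\widehat\Xi(\delta_{I_\Lambda}(p))$. *)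

theory Defs
  imports Complex_Main "HOL-Library.Nat_Bijection" "HOL-Library.FuncSet"
begin

datatype recf = RZ | RS | RP nat | RC recf "recf list" | RPr recf recf | RMn recf

inductive rec_eval :: "recf \<Rightarrow> nat list \<Rightarrow> nat \<Rightarrow> bool" where
  zero: "rec_eval RZ xs 0"
| succ: "rec_eval RS (x # xs) (Suc x)"
| proj: "i < length xs \<Longrightarrow> rec_eval (RP i) xs (xs ! i)"
| comp: "list_all2 (\<lambda>g y. rec_eval g xs y) gs ys \<Longrightarrow> rec_eval f ys z
          \<Longrightarrow> rec_eval (RC f gs) xs z"
| prim0: "rec_eval f xs z \<Longrightarrow> rec_eval (RPr f g) (0 # xs) z"
| primS: "rec_eval (RPr f g) (n # xs) y \<Longrightarrow> rec_eval g (y # n # xs) z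
          \<Longrightarrow> rec_eval (RPr f g) (Suc n # xs) z"
| mu: "rec_eval f (n # xs) 0 \<Longrightarrow> (\<forall>m<n. \<exists>y. y \<noteq> 0 \<and> rec_eval f (m # xs) y)
          \<Longrightarrow> rec_eval (RMn f) xs n"

definition total_rec2 :: "(nat \<Rightarrow> nat \<Rightarrow> nat) \<Rightarrow> bool" where
  "total_rec2 \<phi> \<longleftrightarrow> (\<exists>r. \<forall>a b. rec_eval r [a, b] (\<phi> a b))"

definition prefix_code :: "(nat \<Rightarrow> nat) \<Rightarrow> nat \<Rightarrow> nat" where
  "prefix_code p k = list_encode (map p [0..<k])"

text \<open>F is computable (a restriction of an element of Comp) on the set D: a total computable
  \<phi>(n, w) returns 0 (not yet known) or Suc of the n-th output symbol, looking only at the finite prefix w.\<close>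
definition comp_on :: "(nat \<Rightarrow> nat) set \<Rightarrow> ((nat \<Rightarrow> nat) \<Rightarrow> (nat \<Rightarrow> nat)) \<Rightarrow> bool" where
  "comp_on D F \<longleftrightarrow> (\<exists>\<phi>. total_rec2 \<phi> \<and>
     (\<forall>p\<in>D. \<forall>n. (\<exists>k. \<phi> n (prefix_code p k) \<noteq> 0) \<and>
        (\<forall>k. \<phi> n (prefix_code p k) \<noteq> 0 \<longrightarrow> \<phi> n (prefix_code p k) = Suc (F p n))))"

definition baire_col :: "(nat \<Rightarrow> nat) \<Rightarrow> nat \<Rightarrow> (nat \<Rightarrow> nat)" where
  "baire_col p n = (\<lambda>k. p (prod_encode (n, k)))"

definition lim_dom :: "(nat \<Rightarrow> nat) set" where
  "lim_dom = {p. \<forall>n. \<exists>a. \<exists>K. \<forall>k\<ge>K. baire_col p n k = a}"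

definition lim_op :: "(nat \<Rightarrow> nat) \<Rightarrow> (nat \<Rightarrow> nat)" where
  "lim_op p = (\<lambda>n. THE a. \<exists>K. \<forall>k\<ge>K. baire_col p n k = a)"

definition lim2_dom :: "(nat \<Rightarrow> nat) set" where
  "lim2_dom = {p. p \<in> lim_dom \<and> lim_op p \<in> lim_dom}"

definition lim2 :: "(nat \<Rightarrow> nat) \<Rightarrow> (nat \<Rightarrow> nat)" where
  "lim2 p = lim_op (lim_op p)"

definition nat_to_rat :: "nat \<Rightarrow> real" where
  "nat_to_rat n = (case prod_decode n of (a, b) \<Rightarrow> real_of_int (int_decode a) / real (Suc b))"

definition nat_to_crat :: "nat \<Rightarrow> complex" where
  "nat_to_crat n = (case prod_decode n of (a, b) \<Rightarrow> Complex (nat_to_rat a) (nat_to_rat b))"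

definition cauchy_name :: "(nat \<Rightarrow> nat) \<Rightarrow> complex \<Rightarrow> bool" where
  "cauchy_name p z \<longleftrightarrow> (\<forall>k. cmod (nat_to_crat (p k) - z) \<le> (1/2) ^ k)"

definition prod_cauchy_name :: "(nat \<Rightarrow> nat) \<Rightarrow> (nat \<Rightarrow> complex) \<Rightarrow> bool" where
  "prod_cauchy_name p z \<longleftrightarrow> (\<forall>n. cauchy_name (baire_col p n) (z n))"

definition Ev :: "(nat \<Rightarrow> 'a \<Rightarrow> complex) \<Rightarrow> 'a \<Rightarrow> (nat \<Rightarrow> complex)" where
  "Ev f A = (\<lambda>n. f n A)"

definition Lambda_set :: "'a set \<Rightarrow> (nat \<Rightarrow> 'a \<Rightarrow> complex) \<Rightarrow> ('a \<Rightarrow> complex) set" where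
  "Lambda_set \<Omega> f = range (\<lambda>n. restrict (f n) \<Omega>)"

text \<open>Domain of the subspace representation \<delta>_{I_\<Lambda>}: names of points of I_\<Lambda> = Ev(\<Omega>).\<close>
definition deltaI_dom :: "'a set \<Rightarrow> (nat \<Rightarrow> 'a \<Rightarrow> complex) \<Rightarrow> (nat \<Rightarrow> nat) set" where
  "deltaI_dom \<Omega> f = {p. \<exists>z\<in>Ev f ` \<Omega>. prod_cauchy_name p z}"

definition metric_on :: "'m set \<Rightarrow> ('m \<Rightarrow> 'm \<Rightarrow> real) \<Rightarrow> bool" where
  "metric_on M d \<longleftrightarrow> (\<forall>x\<in>M. \<forall>y\<in>M. (d x y = 0 \<longleftrightarrow> x = y) \<and> d x y = d y x \<and>
      (\<forall>z\<in>M. d x z \<le> d x y + d y z))"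

definition mconv :: "('m \<Rightarrow> 'm \<Rightarrow> real) \<Rightarrow> (nat \<Rightarrow> 'm) \<Rightarrow> 'm \<Rightarrow> bool" where
  "mconv d x L \<longleftrightarrow> (\<forall>\<epsilon>>0. \<exists>N. \<forall>n\<ge>N. d (x n) L < \<epsilon>)"

definition representation :: "(nat \<Rightarrow> nat) set \<Rightarrow> ((nat \<Rightarrow> nat) \<Rightarrow> 'm) \<Rightarrow> 'm set \<Rightarrow> bool" where
  "representation D \<delta> M \<longleftrightarrow> \<delta> ` D = M"

definition consistent :: "'a set \<Rightarrow> (nat \<Rightarrow> 'a \<Rightarrow> complex) \<Rightarrow> ('a \<Rightarrow> 'm) \<Rightarrow> bool" where
  "consistent \<Omega> f \<Xi> \<longleftrightarrow> (\<forall>A\<in>\<Omega>. \<forall>B\<in>\<Omega>. \<Xi> A \<noteq> \<Xi> B \<longrightarrow> (\<exists>n. f n A \<noteq> f n B))"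

definition is_query_map :: "'a set \<Rightarrow> (nat \<Rightarrow> 'a \<Rightarrow> complex) \<Rightarrow> ('a \<Rightarrow> 'm)
    \<Rightarrow> ('a \<Rightarrow> ('a \<Rightarrow> complex) set) \<Rightarrow> bool" where
  "is_query_map \<Omega> f \<Gamma> Q \<longleftrightarrow>
     (\<forall>A\<in>\<Omega>. finite (Q A) \<and> Q A \<noteq> {} \<and> Q A \<subseteq> Lambda_set \<Omega> f) \<and>
     (\<forall>A\<in>\<Omega>. \<forall>B\<in>\<Omega>. (\<forall>g\<in>Q A. g B = g A) \<longrightarrow> \<Gamma> B = \<Gamma> A \<and> Q B = Q A)"

definition general_algorithm :: "'a set \<Rightarrow> (nat \<Rightarrow> 'a \<Rightarrow> complex) \<Rightarrow> ('a \<Rightarrow> 'm) \<Rightarrow> bool" where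
  "general_algorithm \<Omega> f \<Gamma> \<longleftrightarrow> (\<exists>Q. is_query_map \<Omega> f \<Gamma> Q)"

definition fixed_query_algorithm :: "'a set \<Rightarrow> (nat \<Rightarrow> 'a \<Rightarrow> complex) \<Rightarrow> ('a \<Rightarrow> 'm) \<Rightarrow> bool" where
  "fixed_query_algorithm \<Omega> f \<Gamma> \<longleftrightarrow>
     (\<exists>Q. is_query_map \<Omega> f \<Gamma> Q \<and> (\<forall>A\<in>\<Omega>. \<forall>B\<in>\<Omega>. Q A = Q B))"

definition comp_realizable :: "'a set \<Rightarrow> (nat \<Rightarrow> 'a \<Rightarrow> complex) \<Rightarrow> (nat \<Rightarrow> nat) set
    \<Rightarrow> ((nat \<Rightarrow> nat) \<Rightarrow> 'm) \<Rightarrow> ('a \<Rightarrow> 'm) \<Rightarrow> bool" where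
  "comp_realizable \<Omega> f DM \<delta>M \<Gamma> \<longleftrightarrow> (\<exists>F. comp_on (deltaI_dom \<Omega> f) F \<and>
     (\<forall>p. \<forall>A\<in>\<Omega>. prod_cauchy_name p (Ev f A) \<longrightarrow> F p \<in> DM \<and> \<delta>M (F p) = \<Gamma> A))"

definition lim2_realizes :: "'a set \<Rightarrow> (nat \<Rightarrow> 'a \<Rightarrow> complex) \<Rightarrow> (nat \<Rightarrow> nat) set
    \<Rightarrow> ((nat \<Rightarrow> nat) \<Rightarrow> 'm) \<Rightarrow> ('a \<Rightarrow> 'm) \<Rightarrow> ((nat \<Rightarrow> nat) \<Rightarrow> (nat \<Rightarrow> nat)) \<Rightarrow> bool" where
  "lim2_realizes \<Omega> f DM \<delta>M \<Xi> K \<longleftrightarrow>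
     (\<forall>p\<in>deltaI_dom \<Omega> f. K p \<in> lim2_dom \<and>
        (\<forall>A\<in>\<Omega>. prod_cauchy_name p (Ev f A) \<longrightarrow> lim2 (K p) \<in> DM \<and> \<delta>M (lim2 (K p)) = \<Xi> A))"

end

theory Submission
  imports Defs "HOL-Library.Countable_Set"
begin

text \<open>
  Let \<open>\<Omega>\<close> consist of the zero sequence and the unit sequences \<open>e\<^sub>k\<close>, let \<open>\<Lambda>\<close> be the coordinate
  functionals, and let \<open>\<Xi>\<^sub>S(A)\<close> say whether \<open>A = e\<^sub>k\<close> for some \<open>k \<in> S\<close>, for an infinite
  \<open>S \<subseteq> \<nat>\<close>. The truncations \<open>\<Xi>\<^bsub>S \<inter> {..m}\<^esub>\<close> read only the coordinates \<open>0..m\<close>, so they are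
  fixed-query algorithms, and they are eventually equal to \<open>\<Xi>\<^sub>S\<close> at every input. \<open>\<Xi>\<^sub>S\<close> itself
  is not a general algorithm: at the zero sequence it may query only finitely many
  coordinates, but it has to separate it from infinitely many \<open>e\<^sub>k\<close>.

  The bits are represented so that a name consists of the code of a finite set \<open>T\<close> followed
  by a name of the input, and denotes whether the input is some \<open>e\<^sub>k\<close> with \<open>k \<in> T\<close>. Hence each
  truncation is realized by prepending a constant, which is computable. On the other hand a
  computable \<open>K\<close> with \<open>lim\<^sup>2 \<circ> K\<close> realizing \<open>\<Xi>\<^sub>S\<close> determines \<open>S\<close> through its values on the
  names of the \<open>e\<^sub>k\<close>. There are only countably many computable \<open>K\<close>, so a diagonal argument
  provides an infinite \<open>S\<close> for which no such \<open>K\<close> exists.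
\<close>

section \<open>Determinism of mu-recursive evaluation\<close>

lemma list_all2_functional:
  assumes "list_all2 (\<lambda>x y. P x y \<and> (\<forall>z. P x z \<longrightarrow> y = z)) xs ys" and "list_all2 P xs zs"
  shows "ys = zs"
  using assms by (induction arbitrary: zs rule: list_all2_induct) (auto simp: list_all2_Cons1)

inductive_cases rec_eval_RZE: "rec_eval RZ xs y"
inductive_cases rec_eval_RSE: "rec_eval RS xs y"
inductive_cases rec_eval_RPE: "rec_eval (RP i) xs y"
inductive_cases rec_eval_RCE: "rec_eval (RC f gs) xs y"
inductive_cases rec_eval_RPr0E: "rec_eval (RPr f g) (0 # xs) y"
inductive_cases rec_eval_RPrSE: "rec_eval (RPr f g) (Suc n # xs) y"
inductive_cases rec_eval_RMnE: "rec_eval (RMn f) xs y"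

lemma rec_eval_functional: "rec_eval f xs y \<Longrightarrow> rec_eval f xs z \<Longrightarrow> y = z"
proof (induction arbitrary: z rule: rec_eval.induct)
  case zero from zero.prems show ?case by (rule rec_eval_RZE) simp
next
  case succ from succ.prems show ?case by (rule rec_eval_RSE) simp
next
  case proj from proj.prems show ?case by (rule rec_eval_RPE) simp
next
  case (comp xs gs ys f y)
  from comp.prems obtain ys' where ys': "list_all2 (\<lambda>g y. rec_eval g xs y) gs ys'" "rec_eval f ys' z"
    by (rule rec_eval_RCE)
  have "ys = ys'" using comp(1) ys'(1) by (rule list_all2_functional)
  with ys'(2) comp.IH(2) show ?case by simp
next
  case (prim0 f xs y g)
  from prim0.prems have "rec_eval f xs z" by (rule rec_eval_RPr0E)
  then show ?case by (rule prim0.IH)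
next
  case (primS f g n xs y r)
  from primS.prems obtain y' where "rec_eval (RPr f g) (n # xs) y'" "rec_eval g (y' # n # xs) z"
    by (rule rec_eval_RPrSE)
  with primS.IH show ?case by simp
next
  case (mu f n xs)
  from mu.prems have z: "rec_eval f (z # xs) 0" "\<forall>m<z. \<exists>y. y \<noteq> 0 \<and> rec_eval f (m # xs) y"
    by (auto elim: rec_eval_RMnE)
  show ?case
  proof (rule linorder_cases[of n z])
    assume "n < z"
    with z(2) mu.IH(1) show ?thesis by blast
  next
    assume "z < n"
    with z(1) mu.IH(2) show ?thesis by blast
  qed
qed

instance recf :: countable by countable_datatype

lemma countable_total_rec2: "countable {\<phi>. total_rec2 \<phi>}"
proof -
  have "{\<phi>. total_rec2 \<phi>} \<subseteq> range (\<lambda>r a b. THE v. rec_eval r [a, b] v)"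
  proof
    fix \<phi> assume "\<phi> \<in> {\<phi>. total_rec2 \<phi>}"
    then obtain r where r: "\<And>a b. rec_eval r [a, b] (\<phi> a b)" by (auto simp: total_rec2_def)
    have "\<phi> = (\<lambda>a b. THE v. rec_eval r [a, b] v)"
      using r rec_eval_functional by (intro ext the_equality[symmetric]) blast+
    then show "\<phi> \<in> range (\<lambda>r a b. THE v. rec_eval r [a, b] v)" by blast
  qed
  then show ?thesis by (rule countable_subset) simp
qed

section \<open>Arithmetic and pair decoding by mu-recursive terms\<close>

lemma rec_eval_RP: "i < length xs \<Longrightarrow> xs ! i = v \<Longrightarrow> rec_eval (RP i) xs v"
  using rec_eval.proj by blast

lemma rec_eval_RC1: "rec_eval g xs y \<Longrightarrow> rec_eval f [y] z \<Longrightarrow> rec_eval (RC f [g]) xs z"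
  by (rule rec_eval.comp[where ys = "[y]"]) auto

lemma rec_eval_RC2:
  "rec_eval g1 xs y1 \<Longrightarrow> rec_eval g2 xs y2 \<Longrightarrow> rec_eval f [y1, y2] z
    \<Longrightarrow> rec_eval (RC f [g1, g2]) xs z"
  by (rule rec_eval.comp[where ys = "[y1, y2]"]) auto

lemma rec_eval_Suc: "rec_eval g xs y \<Longrightarrow> rec_eval (RC RS [g]) xs (Suc y)"
  by (rule rec_eval_RC1) (auto intro: rec_eval.succ)

primrec rec_const :: "nat \<Rightarrow> recf" where
  "rec_const 0 = RZ"
| "rec_const (Suc c) = RC RS [rec_const c]"

lemma rec_eval_const: "rec_eval (rec_const c) xs c"
  by (induction c) (auto intro: rec_eval.zero rec_eval_Suc)

definition rec_add :: recf where
  "rec_add = RPr (RP 0) (RC RS [RP 0])"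

lemma rec_eval_add: "rec_eval rec_add [x, y] (x + y)"
proof (induction x)
  case 0
  show ?case unfolding rec_add_def by (rule rec_eval.prim0) (rule rec_eval_RP, auto)
next
  case (Suc x)
  show ?case unfolding rec_add_def
    by (rule rec_eval.primS[OF Suc[unfolded rec_add_def]]) (simp add: rec_eval_Suc rec_eval_RP)
qed

definition rec_pred :: recf where
  "rec_pred = RPr RZ (RP 1)"

lemma rec_eval_pred: "rec_eval rec_pred [x] (x - 1)"
proof (induction x)
  case 0
  show ?case unfolding rec_pred_def by (auto intro: rec_eval.prim0 rec_eval.zero)
next
  case (Suc x)
  have "rec_eval (RPr RZ (RP 1)) [Suc x] x"
    by (rule rec_eval.primS[OF Suc[unfolded rec_pred_def]]) (rule rec_eval_RP, auto)
  then show ?case unfolding rec_pred_def by simp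
qed

definition rec_sub_rev :: recf where
  "rec_sub_rev = RPr (RP 0) (RC rec_pred [RP 0])"

lemma rec_eval_sub_rev: "rec_eval rec_sub_rev [y, x] (x - y)"
proof (induction y)
  case 0
  show ?case unfolding rec_sub_rev_def by (rule rec_eval.prim0) (rule rec_eval_RP, auto)
next
  case (Suc y)
  have "rec_eval (RC rec_pred [RP 0]) [x - y, y, x] (x - Suc y)"
    by (rule rec_eval_RC1[OF rec_eval_RP]) (use rec_eval_pred[of "x - y"] in auto)
  then show ?case unfolding rec_sub_rev_def
    by (rule rec_eval.primS[OF Suc[unfolded rec_sub_rev_def]])
qed

definition rec_sub :: recf where
  "rec_sub = RC rec_sub_rev [RP 1, RP 0]"

lemma rec_eval_sub:
  "rec_eval g1 xs x \<Longrightarrow> rec_eval g2 xs y \<Longrightarrow> rec_eval (RC rec_sub [g1, g2]) xs (x - y)"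
  by (rule rec_eval_RC2) (auto simp: rec_sub_def intro!: rec_eval_RC2[OF _ _ rec_eval_sub_rev] rec_eval_RP)

definition rec_triangle :: recf where
  "rec_triangle = RPr RZ (RC rec_add [RC RS [RP 1], RP 0])"

lemma rec_eval_triangle: "rec_eval g xs n \<Longrightarrow> rec_eval (RC rec_triangle [g]) xs (triangle n)"
proof (erule rec_eval_RC1)
  show "rec_eval rec_triangle [n] (triangle n)"
  proof (induction n)
    case 0
    show ?case unfolding rec_triangle_def by (auto intro: rec_eval.prim0 rec_eval.zero)
  next
    case (Suc n)
    have "rec_eval (RC rec_add [RC RS [RP 1], RP 0]) [triangle n, n] (Suc n + triangle n)"
      by (rule rec_eval_RC2[OF rec_eval_Suc[OF rec_eval_RP] rec_eval_RP rec_eval_add]) auto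
    then show ?case unfolding rec_triangle_def
      by (intro rec_eval.primS[OF Suc[unfolded rec_triangle_def]]) (simp add: add.commute)
  qed
qed

definition diagonal_index :: "nat \<Rightarrow> nat" where
  "diagonal_index w = fst (prod_decode w) + snd (prod_decode w)"

lemma triangle_diagonal_index: "triangle (diagonal_index w) + fst (prod_decode w) = w"
  using prod_decode_inverse[of w]
  by (cases "prod_decode w") (simp add: diagonal_index_def prod_encode_def)

lemma triangle_mono: "m \<le> n \<Longrightarrow> triangle m \<le> triangle n"
  by (induction n) (auto simp: le_Suc_eq)

definition rec_diagonal_index :: recf where
  "rec_diagonal_index = RMn (RC rec_sub [RC RS [RP 1], RC rec_triangle [RC RS [RP 0]]])"

lemma rec_eval_diagonal_index: "rec_eval rec_diagonal_index [w] (diagonal_index w)"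
proof -
  let ?test = "RC rec_sub [RC RS [RP 1], RC rec_triangle [RC RS [RP 0]]]"
  have test: "rec_eval ?test [s, w] (Suc w - triangle (Suc s))" for s
    by (intro rec_eval_sub rec_eval_Suc rec_eval_triangle rec_eval_RP) auto
  have "Suc w \<le> triangle (Suc (diagonal_index w))"
    using triangle_diagonal_index[of w] by (simp add: diagonal_index_def)
  then have "rec_eval ?test [diagonal_index w, w] 0"
    using test[of "diagonal_index w"] by simp
  moreover have "Suc w - triangle (Suc s) \<noteq> 0" if "s < diagonal_index w" for s
    using triangle_mono[of "Suc s" "diagonal_index w"] that triangle_diagonal_index[of w] by simp
  ultimately show ?thesis
    unfolding rec_diagonal_index_def using test by (blast intro: rec_eval.mu)
qed

definition rec_fst_decode :: recf where
  "rec_fst_decode = RC rec_sub [RP 0, RC rec_triangle [rec_diagonal_index]]"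

lemma rec_eval_fst_decode: "rec_eval rec_fst_decode [w] (fst (prod_decode w))"
proof -
  have "rec_eval rec_fst_decode [w] (w - triangle (diagonal_index w))"
    unfolding rec_fst_decode_def
    by (intro rec_eval_sub rec_eval_triangle rec_eval_diagonal_index rec_eval_RP) auto
  moreover have "w - triangle (diagonal_index w) = fst (prod_decode w)"
    using triangle_diagonal_index[of w] by linarith
  ultimately show ?thesis by simp
qed

definition rec_snd_decode :: recf where
  "rec_snd_decode = RC rec_sub [rec_diagonal_index, rec_fst_decode]"

lemma rec_eval_snd_decode: "rec_eval rec_snd_decode [w] (snd (prod_decode w))"
proof -
  have "rec_eval rec_snd_decode [w] (diagonal_index w - fst (prod_decode w))"
    unfolding rec_snd_decode_def by (rule rec_eval_sub[OF rec_eval_diagonal_index rec_eval_fst_decode])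
  then show ?thesis by (simp add: diagonal_index_def)
qed

section \<open>Prepending a constant to a point of Baire space is computable\<close>

definition list_hd_code :: "nat \<Rightarrow> nat" where
  "list_hd_code t = fst (prod_decode (t - 1))"

definition list_tl_code :: "nat \<Rightarrow> nat" where
  "list_tl_code t = snd (prod_decode (t - 1))"

lemma list_hd_code_Cons [simp]: "list_hd_code (Suc (prod_encode (x, n))) = x"
  by (simp add: list_hd_code_def)

lemma prod_decode_0 [simp]: "prod_decode 0 = (0, 0)"
  by (simp add: prod_decode_def prod_decode_aux.simps)

lemma list_hd_code_0 [simp]: "list_hd_code 0 = 0"
  by (simp add: list_hd_code_def)

lemma list_tl_code_encode: "list_tl_code (list_encode xs) = list_encode (tl xs)"
  by (cases xs) (simp_all add: list_tl_code_def)

lemma funpow_list_tl_code: "(list_tl_code ^^ i) (list_encode xs) = list_encode (drop i xs)"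
  by (induction i arbitrary: xs) (simp_all add: funpow_Suc_right list_tl_code_encode drop_Suc tl_drop)

definition list_nth_code :: "nat \<Rightarrow> nat \<Rightarrow> nat" where
  "list_nth_code i w =
     (let t = (list_tl_code ^^ i) w in if t = 0 then 0 else Suc (list_hd_code t))"

lemma list_nth_code_encode:
  "list_nth_code i (list_encode xs) = (if i < length xs then Suc (xs ! i) else 0)"
proof (cases "i < length xs")
  case True
  then have "drop i xs = xs ! i # drop (Suc i) xs" by (rule Cons_nth_drop_Suc[symmetric])
  with True show ?thesis
    by (simp add: list_nth_code_def funpow_list_tl_code Let_def)
qed (simp add: list_nth_code_def funpow_list_tl_code)

lemma list_nth_code_prefix_code:
  "list_nth_code i (prefix_code p k) = (if i < k then Suc (p i) else 0)"
  by (simp add: prefix_code_def list_nth_code_encode)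

definition rec_list_hd_code :: recf where
  "rec_list_hd_code = RC rec_fst_decode [RC rec_pred [RP 0]]"

definition rec_list_tl_code :: recf where
  "rec_list_tl_code = RC rec_snd_decode [RC rec_pred [RP 0]]"

lemma rec_eval_list_hd_code: "rec_eval rec_list_hd_code [t] (list_hd_code t)"
  unfolding rec_list_hd_code_def list_hd_code_def
  by (rule rec_eval_RC1[OF rec_eval_RC1[OF rec_eval_RP rec_eval_pred] rec_eval_fst_decode]) auto

lemma rec_eval_list_tl_code: "rec_eval rec_list_tl_code [t] (list_tl_code t)"
  unfolding rec_list_tl_code_def list_tl_code_def
  by (rule rec_eval_RC1[OF rec_eval_RC1[OF rec_eval_RP rec_eval_pred] rec_eval_snd_decode]) auto

definition rec_funpow_list_tl_code :: recf where
  "rec_funpow_list_tl_code = RPr (RP 0) (RC rec_list_tl_code [RP 0])"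

lemma rec_eval_funpow_list_tl_code:
  "rec_eval rec_funpow_list_tl_code [i, w] ((list_tl_code ^^ i) w)"
proof (induction i)
  case 0
  show ?case unfolding rec_funpow_list_tl_code_def
    by (rule rec_eval.prim0) (rule rec_eval_RP, auto)
next
  case (Suc i)
  have "rec_eval (RC rec_list_tl_code [RP 0]) [(list_tl_code ^^ i) w, i, w]
      ((list_tl_code ^^ Suc i) w)"
    by (auto intro: rec_eval_RC1[OF rec_eval_RP rec_eval_list_tl_code])
  then show ?case unfolding rec_funpow_list_tl_code_def
    by (rule rec_eval.primS[OF Suc[unfolded rec_funpow_list_tl_code_def]])
qed

text \<open>The term computes \<open>Suc h - (1 - t)\<close>, where \<open>t\<close> codes the \<open>i\<close>-th tail and \<open>h\<close> is its head
  code; this avoids a case distinction, since it vanishes for \<open>t = 0\<close> (the head code of 0 is 0).\<close>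
definition rec_list_nth_code :: recf where
  "rec_list_nth_code = RC rec_sub
     [RC RS [RC rec_list_hd_code [rec_funpow_list_tl_code]],
      RC rec_sub [rec_const 1, rec_funpow_list_tl_code]]"

lemma rec_eval_list_nth_code: "rec_eval rec_list_nth_code [i, w] (list_nth_code i w)"
proof -
  let ?t = "(list_tl_code ^^ i) w"
  have "rec_eval rec_list_nth_code [i, w] (Suc (list_hd_code ?t) - (1 - ?t))"
    unfolding rec_list_nth_code_def
    by (intro rec_eval_sub rec_eval_Suc rec_eval_const rec_eval_funpow_list_tl_code
        rec_eval_RC1[OF rec_eval_funpow_list_tl_code rec_eval_list_hd_code])
  moreover have "Suc (list_hd_code ?t) - (1 - ?t) = list_nth_code i w"
    by (cases "?t = 0") (simp_all add: list_nth_code_def)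
  ultimately show ?thesis by simp
qed

definition prepend_machine :: "nat \<Rightarrow> nat \<Rightarrow> nat \<Rightarrow> nat" where
  "prepend_machine c n w = (case n of 0 \<Rightarrow> Suc c | Suc i \<Rightarrow> list_nth_code i w)"

definition rec_prepend_machine :: "nat \<Rightarrow> recf" where
  "rec_prepend_machine c = RPr (rec_const (Suc c)) (RC rec_list_nth_code [RP 1, RP 2])"

lemma total_rec2_prepend_machine: "total_rec2 (prepend_machine c)"
  unfolding total_rec2_def
proof (intro exI allI)
  fix n w
  show "rec_eval (rec_prepend_machine c) [n, w] (prepend_machine c n w)"
  proof (induction n)
    case 0
    show ?case unfolding rec_prepend_machine_def prepend_machine_def
      by (simp only: rec_eval.prim0 rec_eval_const nat.case)
  next
    case (Suc i)
    have "rec_eval (RC rec_list_nth_code [RP 1, RP 2]) [prepend_machine c i w, i, w]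
        (list_nth_code i w)"
      by (rule rec_eval_RC2[OF rec_eval_RP rec_eval_RP rec_eval_list_nth_code]) auto
    with Suc show ?case
      unfolding rec_prepend_machine_def by (auto intro: rec_eval.primS simp: prepend_machine_def)
  qed
qed

lemma comp_on_case_nat: "comp_on D (case_nat c)"
proof -
  have "\<exists>k. prepend_machine c n (prefix_code p k) \<noteq> 0" for p n
    by (cases n) (auto simp: prepend_machine_def list_nth_code_prefix_code intro: exI[of _ n])
  moreover have "prepend_machine c n (prefix_code p k) = Suc (case_nat c p n)"
    if "prepend_machine c n (prefix_code p k) \<noteq> 0" for p n k
    using that by (cases n) (auto simp: prepend_machine_def list_nth_code_prefix_code split: if_splits)
  ultimately show ?thesis
    unfolding comp_on_def using total_rec2_prepend_machine by blast
qed

section \<open>There are only countably many computable functionals\<close>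

definition machine_output :: "(nat \<Rightarrow> nat \<Rightarrow> nat) \<Rightarrow> (nat \<Rightarrow> nat) \<Rightarrow> nat \<Rightarrow> nat" where
  "machine_output \<phi> p n = \<phi> n (prefix_code p (LEAST k. \<phi> n (prefix_code p k) \<noteq> 0)) - 1"

lemma comp_on_machine_output:
  assumes "comp_on D F"
  shows "\<exists>\<phi>. total_rec2 \<phi> \<and> (\<forall>p\<in>D. F p = machine_output \<phi> p)"
proof -
  from assms obtain \<phi> where \<phi>: "total_rec2 \<phi>"
    and out: "\<And>p n. p \<in> D \<Longrightarrow> (\<exists>k. \<phi> n (prefix_code p k) \<noteq> 0) \<and>
        (\<forall>k. \<phi> n (prefix_code p k) \<noteq> 0 \<longrightarrow> \<phi> n (prefix_code p k) = Suc (F p n))"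
    unfolding comp_on_def by blast
  have "F p n = machine_output \<phi> p n" if "p \<in> D" for p n
  proof -
    have "\<phi> n (prefix_code p (LEAST k. \<phi> n (prefix_code p k) \<noteq> 0)) = Suc (F p n)"
      using out[OF that] LeastI_ex[of "\<lambda>k. \<phi> n (prefix_code p k) \<noteq> 0"] by blast
    then show ?thesis by (simp add: machine_output_def)
  qed
  with \<phi> show ?thesis by auto
qed

lemma countable_comp_on: "countable {restrict F D | F. comp_on D F}"
proof (rule countable_subset)
  show "{restrict F D | F. comp_on D F} \<subseteq> (\<lambda>\<phi>. restrict (machine_output \<phi>) D) ` {\<phi>. total_rec2 \<phi>}"
    using comp_on_machine_output by (fastforce simp: restrict_def)
qed (intro countable_image countable_total_rec2)

lemma countable_avoids_infinite_set:
  assumes "countable (C :: nat set set)"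
  obtains S where "infinite S" and "S \<notin> C"
proof -
  define g where "g = from_nat_into (insert {} C)"
  have C: "C \<subseteq> range g"
    unfolding g_def using assms subset_range_from_nat_into[of "insert {} C"] by blast
  define S where "S = range (\<lambda>k. 2 * k) \<union> {2 * k + 1 | k. 2 * k + 1 \<notin> g k}"
  have "S \<noteq> g k" for k
  proof -
    have "2 * k + 1 \<in> S \<longleftrightarrow> 2 * k + 1 \<notin> g k"
      unfolding S_def by auto presburger+
    then show ?thesis by blast
  qed
  with C have "S \<notin> C" by blast
  moreover have "infinite S"
    unfolding S_def by (rule infinite_super[OF Un_upper1]) (simp add: range_inj_infinite inj_on_def)
  ultimately show ?thesis by (rule that[rotated])
qed

section \<open>Names of sequences with values in {0, 1}\<close>

lemma prod_cauchy_name_unique: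
  assumes "prod_cauchy_name p z" and "prod_cauchy_name p z'"
  shows "z = z'"
proof
  fix n
  let ?c = "\<lambda>k. nat_to_crat (baire_col p n k)"
  have bound: "cmod (z n - z' n) \<le> 2 * (1/2) ^ k" for k
  proof -
    have "cmod (z n - z' n) \<le> cmod (?c k - z n) + cmod (?c k - z' n)"
      using dist_triangle2[of "z n" "z' n" "?c k"] by (simp add: dist_norm norm_minus_commute)
    also have "\<dots> \<le> 2 * (1/2) ^ k"
      using assms unfolding prod_cauchy_name_def cauchy_name_def by (smt (verit))
    finally show ?thesis .
  qed
  show "z n = z' n"
  proof (rule ccontr)
    assume "z n \<noteq> z' n"
    then obtain k where "(1/2::real) ^ k < cmod (z n - z' n) / 2"
      using real_arch_pow_inv[of "cmod (z n - z' n) / 2" "1/2"] by auto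
    with bound[of k] show False by simp
  qed
qed

definition code_one :: nat where
  "code_one = prod_encode (prod_encode (int_encode 1, 0), 0)"

lemma int_decode_0 [simp]: "int_decode 0 = 0"
  by (simp add: int_decode_def sum_decode_def)

lemma nat_to_crat_code_one: "nat_to_crat code_one = 1"
  by (simp add: code_one_def nat_to_crat_def nat_to_rat_def complex_eq_iff)

lemma nat_to_crat_0: "nat_to_crat 0 = 0"
  by (simp add: nat_to_crat_def nat_to_rat_def complex_eq_iff)

definition binary_name :: "(nat \<Rightarrow> complex) \<Rightarrow> nat \<Rightarrow> nat" where
  "binary_name z j = (if z (fst (prod_decode j)) = 1 then code_one else 0)"

lemma prod_cauchy_name_binary_name:
  assumes "\<And>n. z n = 0 \<or> z n = 1"
  shows "prod_cauchy_name (binary_name z) z"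
proof -
  have "nat_to_crat (baire_col (binary_name z) n k) = z n" for n k
    using assms[of n]
    by (auto simp: baire_col_def binary_name_def nat_to_crat_code_one nat_to_crat_0)
  then show ?thesis by (simp add: prod_cauchy_name_def cauchy_name_def)
qed

definition discrete_dist :: "'a \<Rightarrow> 'a \<Rightarrow> real" where
  "discrete_dist x y = (if x = y then 0 else 1)"

lemma metric_on_discrete_dist: "metric_on M discrete_dist"
  by (simp add: metric_on_def discrete_dist_def)

lemma mconv_discrete_dist_iff: "mconv discrete_dist x L \<longleftrightarrow> (\<exists>N. \<forall>n\<ge>N. x n = L)"
proof
  assume "mconv discrete_dist x L"
  then obtain N where "\<forall>n\<ge>N. discrete_dist (x n) L < 1"
    unfolding mconv_def using zero_less_one by blast
  then show "\<exists>N. \<forall>n\<ge>N. x n = L" by (auto simp: discrete_dist_def split: if_splits)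
qed (auto simp: mconv_def discrete_dist_def)

definition coord :: "nat \<Rightarrow> (nat \<Rightarrow> complex) \<Rightarrow> complex" where
  "coord n A = A n"

lemma Ev_coord [simp]: "Ev coord A = A"
  by (simp add: Ev_def coord_def)

lemma consistent_coord: "consistent \<Omega> coord \<Xi>"
  unfolding consistent_def coord_def by (metis ext)

lemma fixed_query_algorithm_imp_general:
  "fixed_query_algorithm \<Omega> f \<Gamma> \<Longrightarrow> general_algorithm \<Omega> f \<Gamma>"
  unfolding fixed_query_algorithm_def general_algorithm_def by blast

definition unit_seq :: "nat \<Rightarrow> nat \<Rightarrow> complex" where
  "unit_seq k i = (if i = k then 1 else 0)"

definition units_and_zero :: "(nat \<Rightarrow> complex) set" where
  "units_and_zero = insert (\<lambda>_. 0) (range unit_seq)"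

lemma unit_seq_eq_iff [simp]: "unit_seq j = unit_seq k \<longleftrightarrow> j = k"
  by (auto simp: unit_seq_def fun_eq_iff split: if_splits)

lemma zero_neq_unit_seq [simp]: "(\<lambda>_. 0) \<noteq> unit_seq k"
  by (auto simp: unit_seq_def fun_eq_iff)

lemma units_and_zero_eq_unit_seq_iff: "A \<in> units_and_zero \<Longrightarrow> A = unit_seq k \<longleftrightarrow> A k = 1"
  by (auto simp: units_and_zero_def unit_seq_def fun_eq_iff split: if_splits)

lemma prod_cauchy_name_units_and_zero:
  "A \<in> units_and_zero \<Longrightarrow> prod_cauchy_name (binary_name A) A"
  by (rule prod_cauchy_name_binary_name) (auto simp: units_and_zero_def unit_seq_def)

definition bit_seq :: "bool \<Rightarrow> nat \<Rightarrow> nat" where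
  "bit_seq b = (\<lambda>_. of_bool b)"

lemma bit_seq_eq_iff [simp]: "bit_seq a = bit_seq b \<longleftrightarrow> a = b"
  by (auto simp: bit_seq_def fun_eq_iff)

definition unit_membership :: "nat set \<Rightarrow> (nat \<Rightarrow> complex) \<Rightarrow> nat \<Rightarrow> nat" where
  "unit_membership S A = bit_seq (\<exists>k\<in>S. A = unit_seq k)"

definition tagged_decode :: "(nat \<Rightarrow> nat) \<Rightarrow> nat \<Rightarrow> nat" where
  "tagged_decode q = bit_seq (\<exists>k\<in>set_decode (q 0). prod_cauchy_name (\<lambda>i. q (Suc i)) (unit_seq k))"

lemma tagged_decode_case_nat:
  assumes "finite T" and "prod_cauchy_name p A"
  shows "tagged_decode (case_nat (set_encode T) p) = unit_membership T A"
proof -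
  have "prod_cauchy_name p (unit_seq k) \<longleftrightarrow> A = unit_seq k" for k
    using prod_cauchy_name_unique[OF assms(2)] assms(2) by blast
  with assms(1) show ?thesis by (simp add: tagged_decode_def unit_membership_def)
qed

lemma representation_tagged_decode: "representation UNIV tagged_decode (range bit_seq)"
  unfolding representation_def
proof
  show "tagged_decode ` UNIV \<subseteq> range bit_seq" by (auto simp: tagged_decode_def)
  show "range bit_seq \<subseteq> tagged_decode ` UNIV"
  proof clarify
    fix b
    let ?T = "if b then {0} else {}"
    have "tagged_decode (case_nat (set_encode ?T) (binary_name (unit_seq 0)))
        = unit_membership ?T (unit_seq 0)"
      by (rule tagged_decode_case_nat)
        (auto intro: prod_cauchy_name_units_and_zero simp: units_and_zero_def)
    also have "\<dots> = bit_seq b" by (simp add: unit_membership_def)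
    finally show "bit_seq b \<in> tagged_decode ` UNIV" by (metis rangeI)
  qed
qed

lemma mconv_unit_membership_truncation:
  assumes "A \<in> units_and_zero"
  shows "mconv discrete_dist (\<lambda>m. unit_membership (S \<inter> {..m}) A) (unit_membership S A)"
proof -
  have "\<exists>N. \<forall>m\<ge>N. unit_membership (S \<inter> {..m}) A = unit_membership S A"
    using assms unfolding units_and_zero_def
  proof (elim insertE rangeE)
    assume "A = (\<lambda>_. 0)"
    then show ?thesis by (simp add: unit_membership_def)
  next
    fix j assume "A = unit_seq j"
    then have "unit_membership (S \<inter> {..m}) A = unit_membership S A" if "j \<le> m" for m
      using that by (auto simp: unit_membership_def)
    then show ?thesis by blast
  qed
  then show ?thesis by (simp add: mconv_discrete_dist_iff)
qed

lemma unit_membership_in_range: "unit_membership S A \<in> range bit_seq"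
  by (simp add: unit_membership_def)

lemma fixed_query_algorithm_unit_membership:
  assumes "T \<subseteq> {..m}"
  shows "fixed_query_algorithm units_and_zero coord (unit_membership T)"
proof -
  let ?Q = "(\<lambda>i. restrict (coord i) units_and_zero) ` {..m}"
  have "unit_membership T B = unit_membership T A"
    if "A \<in> units_and_zero" "B \<in> units_and_zero" "\<forall>g\<in>?Q. g B = g A" for A B
  proof -
    from that have "B k = A k" if "k \<in> T" for k
      using assms \<open>k \<in> T\<close> by (auto simp: coord_def)
    with that(1,2) show ?thesis
      by (auto simp: unit_membership_def units_and_zero_eq_unit_seq_iff)
  qed
  moreover have "?Q \<subseteq> Lambda_set units_and_zero coord"
    by (auto simp: Lambda_set_def)
  ultimately have "is_query_map units_and_zero coord (unit_membership T) (\<lambda>_. ?Q)"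
    unfolding is_query_map_def by blast
  then show ?thesis unfolding fixed_query_algorithm_def by blast
qed

lemma comp_realizable_unit_membership:
  assumes "finite T"
  shows "comp_realizable units_and_zero coord UNIV tagged_decode (unit_membership T)"
  unfolding comp_realizable_def
  by (intro exI[of _ "case_nat (set_encode T)"])
    (simp add: comp_on_case_nat tagged_decode_case_nat[OF assms])

lemma not_general_algorithm_unit_membership:
  assumes "infinite S"
  shows "\<not> general_algorithm units_and_zero coord (unit_membership S)"
proof
  assume "general_algorithm units_and_zero coord (unit_membership S)"
  then obtain Q where Q: "is_query_map units_and_zero coord (unit_membership S) Q"
    unfolding general_algorithm_def by blast
  let ?zero = "\<lambda>_. 0 :: complex"
  have zero: "?zero \<in> units_and_zero" by (simp add: units_and_zero_def)
  with Q have fin: "finite (Q ?zero)" and sub: "Q ?zero \<subseteq> Lambda_set units_and_zero coord"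
    unfolding is_query_map_def by blast+
  have inj: "inj (\<lambda>i. restrict (coord i) units_and_zero)"
  proof (rule injI)
    fix i j assume "restrict (coord i) units_and_zero = restrict (coord j) units_and_zero"
    then have "unit_seq i i = unit_seq i j"
      by (metis coord_def restrict_apply' rangeI insertCI units_and_zero_def)
    then show "i = j" by (simp add: unit_seq_def split: if_splits)
  qed
  with fin have "finite ((\<lambda>i. restrict (coord i) units_and_zero) -` Q ?zero)"
    by (rule finite_vimageI)
  from Diff_infinite_finite[OF this assms] obtain k
    where k: "k \<in> S" "restrict (coord k) units_and_zero \<notin> Q ?zero"
    using infinite_imp_nonempty by blast
  have "g (unit_seq k) = g ?zero" if "g \<in> Q ?zero" for g
  proof -
    from that sub obtain i where i: "g = restrict (coord i) units_and_zero"
      by (auto simp: Lambda_set_def)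
    with that k(2) have "i \<noteq> k" by blast
    with i zero show ?thesis by (simp add: units_and_zero_def coord_def unit_seq_def)
  qed
  moreover have "unit_seq k \<in> units_and_zero" by (simp add: units_and_zero_def)
  ultimately have "unit_membership S (unit_seq k) = unit_membership S ?zero"
    using Q zero unfolding is_query_map_def by blast
  with k(1) show False by (simp add: unit_membership_def)
qed

lemma countable_lim2_computable_unit_memberships:
  "countable {S. \<exists>K. comp_on (deltaI_dom units_and_zero coord) K \<and>
     lim2_realizes units_and_zero coord UNIV tagged_decode (unit_membership S) K}"
proof -
  let ?D = "deltaI_dom units_and_zero coord"
  let ?decide = "\<lambda>G. {k. tagged_decode (lim2 (G (binary_name (unit_seq k)))) = bit_seq True}"
  have "S = ?decide (restrict K ?D)"
    if "lim2_realizes units_and_zero coord UNIV tagged_decode (unit_membership S) K" for S K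
  proof -
    have "restrict K ?D (binary_name (unit_seq k)) \<in> lim2_dom \<and>
        tagged_decode (lim2 (restrict K ?D (binary_name (unit_seq k)))) = bit_seq (k \<in> S)" for k
    proof -
      have A: "unit_seq k \<in> units_and_zero" by (simp add: units_and_zero_def)
      then have name: "prod_cauchy_name (binary_name (unit_seq k)) (Ev coord (unit_seq k))"
        by (simp add: prod_cauchy_name_units_and_zero)
      with A have "binary_name (unit_seq k) \<in> ?D" by (auto simp: deltaI_dom_def)
      with that A name show ?thesis by (simp add: lim2_realizes_def unit_membership_def)
    qed
    then show ?thesis by auto
  qed
  then have "{S. \<exists>K. comp_on ?D K \<and> lim2_realizes units_and_zero coord UNIV tagged_decode
      (unit_membership S) K} \<subseteq> ?decide ` {restrict K ?D | K. comp_on ?D K}"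
    by blast
  then show ?thesis
    by (rule countable_subset) (intro countable_image countable_comp_on)
qed

theorem mainTheorem17:
  shows "\<exists>(\<Omega> :: (nat \<Rightarrow> complex) set) (M :: (nat \<Rightarrow> nat) set) (d :: (nat \<Rightarrow> nat) \<Rightarrow> (nat \<Rightarrow> nat) \<Rightarrow> real)
           (\<Xi> :: (nat \<Rightarrow> complex) \<Rightarrow> (nat \<Rightarrow> nat)) (f :: nat \<Rightarrow> (nat \<Rightarrow> complex) \<Rightarrow> complex)
           (DM :: (nat \<Rightarrow> nat) set) (\<delta>M :: (nat \<Rightarrow> nat) \<Rightarrow> (nat \<Rightarrow> nat))
           (\<Gamma>1 :: nat \<Rightarrow> (nat \<Rightarrow> complex) \<Rightarrow> (nat \<Rightarrow> nat))
           (\<Gamma>2 :: nat \<Rightarrow> nat \<Rightarrow> (nat \<Rightarrow> complex) \<Rightarrow> (nat \<Rightarrow> nat)).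
      metric_on M d \<and> (\<forall>A\<in>\<Omega>. \<Xi> A \<in> M) \<and> consistent \<Omega> f \<Xi> \<and> representation DM \<delta>M M \<and>
      (\<forall>n. \<forall>A\<in>\<Omega>. \<Gamma>1 n A \<in> M) \<and> (\<forall>n m. \<forall>A\<in>\<Omega>. \<Gamma>2 n m A \<in> M) \<and>
      (\<forall>A\<in>\<Omega>. mconv d (\<lambda>n. \<Gamma>1 n A) (\<Xi> A)) \<and>
      (\<forall>n. \<forall>A\<in>\<Omega>. mconv d (\<lambda>m. \<Gamma>2 n m A) (\<Gamma>1 n A)) \<and>
      (\<forall>n m. general_algorithm \<Omega> f (\<Gamma>2 n m) \<and> comp_realizable \<Omega> f DM \<delta>M (\<Gamma>2 n m)) \<and>
      (\<forall>n m. fixed_query_algorithm \<Omega> f (\<Gamma>2 n m) \<and> comp_realizable \<Omega> f DM \<delta>M (\<Gamma>2 n m)) \<and>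
      (\<forall>n. \<not> general_algorithm \<Omega> f (\<Gamma>1 n)) \<and>
      \<not> (\<exists>K. comp_on (deltaI_dom \<Omega> f) K \<and> lim2_realizes \<Omega> f DM \<delta>M \<Xi> K)"
proof -
  obtain S where S: "infinite S" and not_lim2_computable:
    "S \<notin> {S. \<exists>K. comp_on (deltaI_dom units_and_zero coord) K \<and>
       lim2_realizes units_and_zero coord UNIV tagged_decode (unit_membership S) K}"
    using countable_avoids_infinite_set[OF countable_lim2_computable_unit_memberships] by blast
  have fixed_query: "fixed_query_algorithm units_and_zero coord (unit_membership (S \<inter> {..m}))" for m
    by (rule fixed_query_algorithm_unit_membership) blast
  have conv_const: "mconv discrete_dist (\<lambda>n. unit_membership S A) (unit_membership S A)" for A
    by (auto simp: mconv_discrete_dist_iff)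
  show ?thesis
    apply (rule exI[of _ units_and_zero], rule exI[of _ "range bit_seq"], rule exI[of _ discrete_dist],
        rule exI[of _ "unit_membership S"], rule exI[of _ coord], rule exI[of _ UNIV],
        rule exI[of _ tagged_decode], rule exI[of _ "\<lambda>n. unit_membership S"],
        rule exI[of _ "\<lambda>n m. unit_membership (S \<inter> {..m})"])
    using representation_tagged_decode
      unit_membership_in_range mconv_unit_membership_truncation
      fixed_query fixed_query_algorithm_imp_general[OF fixed_query]
      comp_realizable_unit_membership not_general_algorithm_unit_membership[OF S]
      not_lim2_computable conv_const
    by (simp add: metric_on_discrete_dist consistent_coord)
qed

end
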